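(* Let $(X,d_X)$ and $(Y,d_Y)$ be separable metric spaces such that $d_X$ is an ultrametric. For every $f: X\to Y$ the following are equivalent: (i) $f$ is of Baire class $1$; (ii) $f$ is the pointwise limit of a sequence of $\omega$-full functions; (iii) $f$ is the pointwise limit of a sequence of Lipschitz functions; (iv) $f$ is the pointwise limit of a sequence of uniformly continuous functions.
   Context: Work in ZF plus countable choice over the reals. A function $f:X\to Y$ is of Baire class $1$ if $f^{-1}(U)\in\mathbf{\Sigma}^0_2(X)$ for every open $U\subseteq Y$. A set $A\subseteq X$ is full with constant $r>0$ if $B(x,r)=\{y\in X:d_X(x,y)<r\}\subseteq A$ for every $x\in A$. A function $f:X\to Y$ is $\omega$-full if it has at most countably many values and there is a fixed $r>0$ such that the preimage of each value is a full set with constant $r$. A function $g:X\to Y$ is Lipschitz if there is $L>0$ with $d_Y(g(x),g(x'))\le L\, d_X(x,x')$ for all $x,x'\in X$. *)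

theory Defs
  imports "HOL-Analysis.Analysis"
begin

definition ultrametric :: "'a metric \<Rightarrow> bool" where
  "ultrametric m \<longleftrightarrow>
     (\<forall>x\<in>mspace m. \<forall>y\<in>mspace m. \<forall>z\<in>mspace m.
        mdist m x z \<le> max (mdist m x y) (mdist m y z))"

definition baire_class_1 :: "'a metric \<Rightarrow> 'b metric \<Rightarrow> ('a \<Rightarrow> 'b) \<Rightarrow> bool" where
  "baire_class_1 mX mY f \<longleftrightarrow>
     f \<in> mspace mX \<rightarrow> mspace mY \<and>
     (\<forall>U. openin (mtopology_of mY) U \<longrightarrow>
        fsigma_in (mtopology_of mX) {x \<in> mspace mX. f x \<in> U})"

definition full_set :: "'a metric \<Rightarrow> 'a set \<Rightarrow> real \<Rightarrow> bool" where
  "full_set mX A r \<longleftrightarrow> A \<subseteq> mspace mX \<and> (\<forall>x\<in>A. mball_of mX x r \<subseteq> A)"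

definition omega_full :: "'a metric \<Rightarrow> 'b metric \<Rightarrow> ('a \<Rightarrow> 'b) \<Rightarrow> bool" where
  "omega_full mX mY f \<longleftrightarrow>
     f \<in> mspace mX \<rightarrow> mspace mY \<and>
     countable (f ` mspace mX) \<and>
     (\<exists>r>0. \<forall>y\<in>f ` mspace mX. full_set mX {x \<in> mspace mX. f x = y} r)"

definition pointwise_limit :: "'a metric \<Rightarrow> 'b metric \<Rightarrow> (nat \<Rightarrow> 'a \<Rightarrow> 'b) \<Rightarrow> ('a \<Rightarrow> 'b) \<Rightarrow> bool" where
  "pointwise_limit mX mY g f \<longleftrightarrow>
     (\<forall>x\<in>mspace mX. limitin (mtopology_of mY) (\<lambda>n. g n x) (f x) sequentially)"

end

theory Submission
  imports Defs
begin

text \<open>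
  Since preimages of balls are \<open>F\<^sub>\<sigma>\<close>, for each precision
  \<open>1/(n+1)\<close> the space \<open>X\<close> is covered by countably many closed sets \<open>C n j\<close> on which \<open>f\<close>
  stays within \<open>1/(n+1)\<close> of a point \<open>w n j\<close> of a dense sequence. For the ball \<open>B\<close> of radius
  \<open>1/(N+1)\<close> around \<open>x\<close>, take for each \<open>n\<close> the centre of the first \<open>C n j\<close> met by \<open>B\<close>; as \<open>N\<close>
  grows this is eventually the first \<open>C n j\<close> containing \<open>x\<close>, because closed sets missing \<open>x\<close>
  eventually miss \<open>B\<close>. A diagonal choice over \<open>n\<close> then converges to \<open>f x\<close>. In an
  ultrametric space balls of equal radius either coincide or are disjoint, so these
  approximants are constant on all balls of radius \<open>1/(N+1)\<close>, i.e. \<open>\<omega>\<close>-full.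

  Truncating an \<open>\<omega>\<close>-full function to the ball of radius \<open>n\<close> about a fixed point makes it
  Lipschitz without spoiling pointwise convergence. Finally a pointwise limit of continuous
  maps is of Baire class 1, as \<open>f\<^sup>-\<^sup>1(U) = \<Union>\<^sub>m\<^sub>,\<^sub>k \<Inter>\<^sub>n\<^sub>\<ge>\<^sub>k g\<^sub>n\<^sup>-\<^sup>1{y. d(y, Y - U) \<ge> 1/(m+1)}\<close>.
\<close>

lemma eventually_one_over_Suc_less:
  "0 < (\<delta>::real) \<Longrightarrow> eventually (\<lambda>N. 1 / real (Suc N) < \<delta>) sequentially"
  using order_tendstoD(2)[OF LIMSEQ_inverse_real_of_nat] by (simp add: inverse_eq_divide)

lemma mdist_self [simp]: "x \<in> mspace m \<Longrightarrow> mdist m x x = 0"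
  by (rule Metric_space.mdist_zero[OF Metric_space_mspace_mdist])

lemma limitin_mtopology_of_sequentially:
  "limitin (mtopology_of m) s l sequentially \<longleftrightarrow>
     l \<in> mspace m \<and> (\<forall>\<epsilon>>0. \<exists>N. \<forall>n\<ge>N. s n \<in> mspace m \<and> mdist m (s n) l < \<epsilon>)"
  by (simp add: mtopology_of_def Metric_space.limit_metric_sequentially[OF Metric_space_mspace_mdist])

lemma openin_mtopology_of:
  "openin (mtopology_of m) U \<longleftrightarrow> U \<subseteq> mspace m \<and> (\<forall>x\<in>U. \<exists>r>0. mball_of m x r \<subseteq> U)"
  by (auto simp: mtopology_of_def mball_of_def Metric_space.openin_mtopology[OF Metric_space_mspace_mdist])

lemma closedin_mtopology_of:
  "closedin (mtopology_of m) C \<longleftrightarrow>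
     C \<subseteq> mspace m \<and> (\<forall>x\<in>mspace m - C. \<exists>r>0. disjnt C (mball_of m x r))"
  by (auto simp: mtopology_of_def mball_of_def Metric_space.closedin_metric[OF Metric_space_mspace_mdist])

lemma openin_mball_of: "openin (mtopology_of m) (mball_of m x r)"
  by (simp add: mtopology_of_def mball_of_def Metric_space.openin_mball[OF Metric_space_mspace_mdist])

lemma closedin_mdist_ge_set:
  assumes "S \<subseteq> mspace m"
  shows "closedin (mtopology_of m) {y \<in> mspace m. \<forall>z\<in>S. e \<le> mdist m y z}"
proof -
  have "closedin (mtopology_of m) {y \<in> topspace (mtopology_of m). mdist m y z \<in> {e..}}"
    if "z \<in> S" for z
    using that assms
    by (intro closedin_continuous_map_preimage[where Y=euclidean] continuous_map_mdist) auto
  moreover have eq: "{y \<in> mspace m. \<forall>z\<in>S. e \<le> mdist m y z} =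
      \<Inter> (insert (mspace m) ((\<lambda>z. {y \<in> topspace (mtopology_of m). mdist m y z \<in> {e..}}) ` S))"
    by auto
  ultimately show ?thesis
    unfolding eq by (intro closedin_Inter) (auto intro: closedin_topspace[of "mtopology_of m", simplified])
qed

lemma baire_class_1_pointwise_limit_continuous:
  assumes cont: "\<And>n. continuous_map (mtopology_of mX) (mtopology_of mY) (g n)"
    and lim: "pointwise_limit mX mY g f"
    and f: "f \<in> mspace mX \<rightarrow> mspace mY"
  shows "baire_class_1 mX mY f"
  unfolding baire_class_1_def
proof (intro conjI allI impI)
  show "f \<in> mspace mX \<rightarrow> mspace mY" by fact
  fix U assume U: "openin (mtopology_of mY) U"
  define F where "F m = {y \<in> mspace mY. \<forall>z\<in>mspace mY - U. 1 / Suc m \<le> mdist mY y z}" for m :: nat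
  define S where "S m k = (\<Inter>n\<in>{k..}. {x \<in> mspace mX. g n x \<in> F m})" for m k :: nat
  have closed: "closedin (mtopology_of mX) (S m k)" for m k
    using closedin_continuous_map_preimage[OF cont closedin_mdist_ge_set[of "mspace mY - U"]]
    by (auto simp: S_def F_def intro!: closedin_Inter)
  have eq: "{x \<in> mspace mX. f x \<in> U} = (\<Union>(m, k). S m k)"
  proof (intro equalityI subsetI)
    fix x assume x: "x \<in> {x \<in> mspace mX. f x \<in> U}"
    then have fx: "f x \<in> mspace mY" using f by auto
    obtain e where e: "e > 0" "mball_of mY (f x) e \<subseteq> U"
      using U x unfolding openin_mtopology_of by blast
    obtain m where m: "2 / Suc m < e"
      using eventually_happens'[OF _ eventually_one_over_Suc_less[of "e/2"]] e by auto
    obtain k where k: "\<forall>n\<ge>k. g n x \<in> mspace mY \<and> mdist mY (g n x) (f x) < 1 / Suc m"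
      using lim x unfolding pointwise_limit_def limitin_mtopology_of_sequentially by force
    have "g n x \<in> F m" if n: "n \<ge> k" for n
      unfolding F_def
    proof (intro CollectI conjI ballI)
      fix z assume z: "z \<in> mspace mY - U"
      then have "e \<le> mdist mY (f x) z" using e fx by (force simp: not_less)
      moreover have "mdist mY (f x) z \<le> mdist mY (f x) (g n x) + mdist mY (g n x) z"
        using fx z k n by (intro mdist_triangle) auto
      ultimately show "1 / Suc m \<le> mdist mY (g n x) z"
        using k n m by (auto simp: mdist_commute)
    qed (use k n in auto)
    then show "x \<in> (\<Union>(m, k). S m k)" using x by (auto simp: S_def)
  next
    fix x assume "x \<in> (\<Union>(m, k). S m k)"
    then obtain m k where x: "x \<in> mspace mX" and gF: "\<And>n. n \<ge> k \<Longrightarrow> g n x \<in> F m"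
      by (auto simp: S_def)
    obtain N where N: "\<forall>n\<ge>N. g n x \<in> mspace mY \<and> mdist mY (g n x) (f x) < 1 / Suc m"
      using lim x unfolding pointwise_limit_def limitin_mtopology_of_sequentially by force
    have "1 / Suc m > mdist mY (g (max N k) x) (f x)" using N by simp
    then have "f x \<in> U" using gF[of "max N k"] f x by (force simp: F_def)
    then show "x \<in> {x \<in> mspace mX. f x \<in> U}" using x by blast
  qed
  show "fsigma_in (mtopology_of mX) {x \<in> mspace mX. f x \<in> U}"
    unfolding eq by (intro fsigma_in_Union) (auto intro: closed_imp_fsigma_in closed)
qed

lemma ultrametric_mball_of_eq:
  assumes "ultrametric m" and "z \<in> mball_of m x r"
  shows "mball_of m z r = mball_of m x r"
proof -
  have sub: "mball_of m a r \<subseteq> mball_of m b r" if "b \<in> mball_of m a r" for a b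
  proof
    fix v assume v: "v \<in> mball_of m a r"
    then have "mdist m b v \<le> max (mdist m b a) (mdist m a v)"
      using assms(1) that unfolding ultrametric_def in_mball_of by blast
    then show "v \<in> mball_of m b r" using v that by (simp add: mdist_commute max_def split: if_splits)
  qed
  have "x \<in> mball_of m z r" using assms(2) by (auto simp: mdist_commute)
  then show ?thesis using sub assms(2) by (intro equalityI) simp_all
qed

lemma omega_full_iff_uniformly_locally_constant:
  "omega_full mX mY g \<longleftrightarrow>
     g \<in> mspace mX \<rightarrow> mspace mY \<and> countable (g ` mspace mX) \<and>
     (\<exists>r>0. \<forall>x\<in>mspace mX. \<forall>z\<in>mball_of mX x r. g z = g x)"
proof -
  have "(\<forall>y\<in>g ` mspace mX. full_set mX {x \<in> mspace mX. g x = y} r) \<longleftrightarrow>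
          (\<forall>x\<in>mspace mX. \<forall>z\<in>mball_of mX x r. g z = g x)" for r
  proof
    assume "\<forall>y\<in>g ` mspace mX. full_set mX {x \<in> mspace mX. g x = y} r"
    then show "\<forall>x\<in>mspace mX. \<forall>z\<in>mball_of mX x r. g z = g x"
      unfolding full_set_def by blast
  next
    assume "\<forall>x\<in>mspace mX. \<forall>z\<in>mball_of mX x r. g z = g x"
    then show "\<forall>y\<in>g ` mspace mX. full_set mX {x \<in> mspace mX. g x = y} r"
      unfolding full_set_def by fastforce
  qed
  then show ?thesis unfolding omega_full_def by simp
qed

lemma Lipschitz_continuous_map_if_uniformly_locally_constant_bounded:
  assumes g: "g \<in> mspace mX \<rightarrow> mspace mY" and p: "p \<in> mspace mY"
    and r: "r > 0" and const: "\<And>x z. z \<in> mball_of mX x r \<Longrightarrow> g z = g x"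
    and bounded: "\<And>x. x \<in> mspace mX \<Longrightarrow> mdist mY (g x) p \<le> R"
  shows "Lipschitz_continuous_map mX mY g"
  unfolding Lipschitz_continuous_map_def
proof (intro conjI exI ballI)
  show "g \<in> mspace mX \<rightarrow> mspace mY" by fact
  fix x z assume x: "x \<in> mspace mX" and z: "z \<in> mspace mX"
  have R: "0 \<le> R" using bounded[OF x] mdist_nonneg[of mY "g x" p] by linarith
  show "mdist mY (g x) (g z) \<le> (2 * R / r) * mdist mX x z"
  proof (cases "mdist mX x z < r")
    case True
    then have "g z = g x" using const x z by simp
    moreover have "g x \<in> mspace mY" using g x by blast
    ultimately show ?thesis using r R by simp
  next
    case False
    have "mdist mY (g x) (g z) \<le> mdist mY (g x) p + mdist mY p (g z)"
      using g x z p by (intro mdist_triangle) auto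
    also have "\<dots> \<le> (2 * R / r) * r"
      using bounded[OF x] bounded[OF z] r by (simp add: mdist_commute)
    also have "\<dots> \<le> (2 * R / r) * mdist mX x z"
      using False r R by (intro mult_left_mono) auto
    finally show ?thesis .
  qed
qed

lemma pointwise_limit_truncate:
  assumes lim: "pointwise_limit mX mY g f" and p: "p \<in> mspace mY"
  shows "pointwise_limit mX mY (\<lambda>n x. if mdist mY (g n x) p \<le> real n then g n x else p) f"
  unfolding pointwise_limit_def
proof
  fix x assume x: "x \<in> mspace mX"
  have L: "limitin (mtopology_of mY) (\<lambda>n. g n x) (f x) sequentially"
    using lim x unfolding pointwise_limit_def by blast
  then obtain N where fx: "f x \<in> mspace mY"
    and N: "\<forall>n\<ge>N. g n x \<in> mspace mY \<and> mdist mY (g n x) (f x) < 1"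
    unfolding limitin_mtopology_of_sequentially by (meson zero_less_one)
  obtain K :: nat where K: "mdist mY (f x) p + 1 \<le> K" using real_arch_simple by blast
  have "mdist mY (g n x) p \<le> real n" if n: "max N K \<le> n" for n
  proof -
    have "mdist mY (g n x) p \<le> mdist mY (g n x) (f x) + mdist mY (f x) p"
      using N n fx p by (intro mdist_triangle) auto
    then show ?thesis using N n K by fastforce
  qed
  then have "eventually (\<lambda>n. g n x = (if mdist mY (g n x) p \<le> real n then g n x else p)) sequentially"
    unfolding eventually_sequentially by (auto intro!: exI[of _ "max N K"])
  then show "limitin (mtopology_of mY) (\<lambda>n. if mdist mY (g n x) p \<le> real n then g n x else p)
      (f x) sequentially"
    using limitin_transform_eventually L by fastforce
qed

lemma omega_full_limit_imp_Lipschitz_limit: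
  assumes omega: "\<And>n. omega_full mX mY (g n)" and lim: "pointwise_limit mX mY g f"
  shows "\<exists>h. (\<forall>n. Lipschitz_continuous_map mX mY (h n)) \<and> pointwise_limit mX mY h f"
proof (cases "mspace mX = {}")
  case True
  then have "Lipschitz_continuous_map mX mY (g n)" for n
    using omega[of n] by (simp add: omega_full_def Lipschitz_continuous_map_def)
  then show ?thesis using lim by blast
next
  case False
  then obtain x0 where "x0 \<in> mspace mX" by blast
  then have p: "g 0 x0 \<in> mspace mY" using omega[of 0] by (auto simp: omega_full_def)
  define h where "h n x = (if mdist mY (g n x) (g 0 x0) \<le> real n then g n x else g 0 x0)" for n x
  have "Lipschitz_continuous_map mX mY (h n)" for n
  proof -
    obtain r where g: "g n \<in> mspace mX \<rightarrow> mspace mY" and r: "r > 0"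
      and const: "\<And>x z. x \<in> mspace mX \<Longrightarrow> z \<in> mball_of mX x r \<Longrightarrow> g n z = g n x"
      using omega[of n] unfolding omega_full_iff_uniformly_locally_constant by blast
    show ?thesis
    proof (rule Lipschitz_continuous_map_if_uniformly_locally_constant_bounded[OF _ p r])
      show "h n \<in> mspace mX \<rightarrow> mspace mY" using g p by (auto simp: h_def)
      show "h n z = h n x" if "z \<in> mball_of mX x r" for x z
        using const[of x z] that by (simp add: h_def)
      show "mdist mY (h n x) (g 0 x0) \<le> real n" if "x \<in> mspace mX" for x
        using p by (simp add: h_def)
    qed
  qed
  moreover have "pointwise_limit mX mY h f"
    unfolding h_def by (rule pointwise_limit_truncate[OF lim p])
  ultimately show ?thesis by blast
qed

text \<open>
  Diagonalises approximations \<open>a N n\<close> of \<open>y\<close> with error eventually \<open>1/(n+1)\<close>, whose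
  convergence in \<open>N\<close> need not be uniform in \<open>n\<close>.
\<close>
definition coherent_index :: "'b metric \<Rightarrow> (nat \<Rightarrow> 'b) \<Rightarrow> nat \<Rightarrow> nat" where
  "coherent_index m a N =
     (GREATEST k. k \<le> N \<and> (\<forall>j\<le>k. mdist m (a j) (a k) < 1 / Suc j + 1 / Suc k))"

lemma coherent_index_limit:
  assumes a: "\<And>N n. a N n \<in> mspace m" and y: "y \<in> mspace m"
    and approx: "\<And>n. eventually (\<lambda>N. mdist m (a N n) y < 1 / Suc n) sequentially"
  shows "limitin (mtopology_of m) (\<lambda>N. a N (coherent_index m (a N) N)) y sequentially"
  unfolding limitin_mtopology_of_sequentially
proof (intro conjI allI impI)
  show "y \<in> mspace m" by fact
  fix \<epsilon> :: real assume "\<epsilon> > 0"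
  then obtain n0 where n0: "1 / Suc n0 < \<epsilon> / 3"
    using eventually_happens'[OF _ eventually_one_over_Suc_less[of "\<epsilon> / 3"]] by auto
  have "eventually (\<lambda>N. n0 \<le> N \<and> (\<forall>j\<in>{..n0}. mdist m (a N j) y < 1 / Suc j)) sequentially"
    by (intro eventually_conj eventually_ge_at_top eventually_ball_finite)
      (simp_all add: approx del: of_nat_Suc)
  then obtain N0 where N0: "\<And>N. N \<ge> N0 \<Longrightarrow> n0 \<le> N \<and> (\<forall>j\<le>n0. mdist m (a N j) y < 1 / Suc j)"
    unfolding eventually_sequentially by auto
  show "\<exists>N0. \<forall>N\<ge>N0. a N (coherent_index m (a N) N) \<in> mspace m \<and>
                      mdist m (a N (coherent_index m (a N) N)) y < \<epsilon>"
  proof (intro exI allI impI conjI)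
    fix N assume N: "N \<ge> N0"
    show "a N (coherent_index m (a N) N) \<in> mspace m" by (rule a)
    define P where "P k \<longleftrightarrow> k \<le> N \<and> (\<forall>j\<le>k. mdist m (a N j) (a N k) < 1 / Suc j + 1 / Suc k)"
      for k
    have "P n0"
      unfolding P_def
    proof (intro conjI allI impI)
      show "n0 \<le> N" using N0[OF N] by blast
      fix j assume "j \<le> n0"
      have "mdist m (a N j) (a N n0) \<le> mdist m (a N j) y + mdist m y (a N n0)"
        using a y by (intro mdist_triangle)
      moreover have "mdist m (a N j) y < 1 / Suc j" "mdist m (a N n0) y < 1 / Suc n0"
        using N0[OF N] \<open>j \<le> n0\<close> by auto
      ultimately show "mdist m (a N j) (a N n0) < 1 / Suc j + 1 / Suc n0"
        by (simp add: mdist_commute)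
    qed
    moreover have bounded: "P k \<Longrightarrow> k \<le> N" for k by (simp add: P_def)
    ultimately have k: "P (Greatest P)" and n0k: "n0 \<le> Greatest P"
      by (blast intro: GreatestI_nat Greatest_le_nat)+
    have "Greatest P = coherent_index m (a N) N"
      unfolding coherent_index_def P_def[abs_def] ..
    moreover have "mdist m (a N (Greatest P)) y
        \<le> mdist m (a N (Greatest P)) (a N n0) + mdist m (a N n0) y"
      using a y by (intro mdist_triangle)
    moreover have "mdist m (a N n0) (a N (Greatest P)) < 1 / Suc n0 + 1 / Suc (Greatest P)"
      using k n0k by (simp add: P_def)
    moreover have "1 / Suc (Greatest P) \<le> 1 / Suc n0"
      using n0k by (simp add: frac_le)
    moreover have "mdist m (a N n0) y < 1 / Suc n0" using N0[OF N] by blast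
    ultimately show "mdist m (a N (coherent_index m (a N) N)) y < \<epsilon>"
      using n0 by (simp add: mdist_commute)
  qed
qed

lemma eventually_Least_meeting_mball_eq:
  fixes C :: "nat \<Rightarrow> 'a set"
  assumes closed: "\<And>j. closedin (mtopology_of m) (C j)" and x: "x \<in> C i"
  shows "eventually (\<lambda>N. (LEAST j. mball_of m x (1 / Suc N) \<inter> C j \<noteq> {}) = (LEAST j. x \<in> C j))
           sequentially"
proof -
  define j0 where "j0 = (LEAST j. x \<in> C j)"
  have xj0: "x \<in> C j0" unfolding j0_def using x by (rule LeastI)
  have xX: "x \<in> mspace m" using closedin_subset[OF closed] xj0 by auto
  have "eventually (\<lambda>N. mball_of m x (1 / Suc N) \<inter> C j = {}) sequentially" if "j < j0" for j
  proof -
    have "x \<notin> C j" using that not_less_Least unfolding j0_def by blast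
    then obtain \<delta> where \<delta>: "\<delta> > 0" and disj: "disjnt (C j) (mball_of m x \<delta>)"
      using closed[of j] xX unfolding closedin_mtopology_of by blast
    show ?thesis
      using eventually_one_over_Suc_less[OF \<delta>]
      by eventually_elim (use disj in \<open>auto simp: disjnt_def\<close>)
  qed
  then have "eventually (\<lambda>N. \<forall>j\<in>{..<j0}. mball_of m x (1 / Suc N) \<inter> C j = {}) sequentially"
    by (intro eventually_ball_finite) auto
  then show ?thesis
  proof eventually_elim
    case (elim N)
    show ?case
      unfolding j0_def[symmetric]
    proof (rule Least_equality)
      have "x \<in> mball_of m x (1 / Suc N) \<inter> C j0" using xX xj0 by simp
      then show "mball_of m x (1 / Suc N) \<inter> C j0 \<noteq> {}" by blast
      show "j0 \<le> j" if "mball_of m x (1 / Suc N) \<inter> C j \<noteq> {}" for j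
        using elim that not_less by blast
    qed
  qed
qed

lemma omega_full_limit_of_closed_covers:
  fixes C :: "nat \<Rightarrow> nat \<Rightarrow> 'a set"
  assumes ultra: "ultrametric mX"
    and closed: "\<And>n j. closedin (mtopology_of mX) (C n j)"
    and cover: "\<And>n x. x \<in> mspace mX \<Longrightarrow> \<exists>j. x \<in> C n j"
    and approx: "\<And>n j x. x \<in> C n j \<Longrightarrow> mdist mY (f x) (w n j) < 1 / Suc n"
    and w: "\<And>n j. w n j \<in> mspace mY"
    and f: "f \<in> mspace mX \<rightarrow> mspace mY"
  shows "\<exists>g. (\<forall>n. omega_full mX mY (g n)) \<and> pointwise_limit mX mY g f"
proof -
  define a where "a N x n = w n (LEAST j. mball_of mX x (1 / real (Suc N)) \<inter> C n j \<noteq> {})"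
    for N x n
  define g where "g N x = a N x (coherent_index mY (a N x) N)" for N x
  have "omega_full mX mY (g N)" for N
    unfolding omega_full_iff_uniformly_locally_constant
  proof (intro conjI exI ballI)
    show "g N \<in> mspace mX \<rightarrow> mspace mY" using w by (simp add: g_def a_def)
    show "countable (g N ` mspace mX)"
      by (rule countable_subset[of _ "range (case_prod w)"]) (auto simp: g_def a_def)
    show "0 < 1 / real (Suc N)" by simp
    fix x z assume "z \<in> mball_of mX x (1 / Suc N)"
    then have "mball_of mX z (1 / Suc N) = mball_of mX x (1 / Suc N)"
      by (rule ultrametric_mball_of_eq[OF ultra])
    then have "a N z = a N x" by (simp add: a_def fun_eq_iff)
    then show "g N z = g N x" by (simp add: g_def)
  qed
  moreover have "pointwise_limit mX mY g f"
    unfolding pointwise_limit_def g_def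
  proof (intro ballI coherent_index_limit)
    fix x assume x: "x \<in> mspace mX"
    then show "f x \<in> mspace mY" using f by blast
    fix n
    obtain i where "x \<in> C n i" using cover[OF x] by blast
    then have "x \<in> C n (LEAST j. x \<in> C n j)" by (rule LeastI)
    then have close: "mdist mY (w n (LEAST j. x \<in> C n j)) (f x) < 1 / Suc n"
      using approx by (simp add: mdist_commute)
    show "eventually (\<lambda>N. mdist mY (a N x n) (f x) < 1 / Suc n) sequentially"
      using eventually_Least_meeting_mball_eq[where C="C n", OF closed \<open>x \<in> C n i\<close>]
      by eventually_elim (use close in \<open>simp add: a_def\<close>)
  qed (simp add: a_def w)
  ultimately show ?thesis by blast
qed

lemma separable_space_dense_sequence:
  assumes sep: "separable_space (mtopology_of m)" and ne: "mspace m \<noteq> {}"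
  obtains e :: "nat \<Rightarrow> 'a" where "range e \<subseteq> mspace m"
    and "\<And>y \<epsilon>. y \<in> mspace m \<Longrightarrow> \<epsilon> > 0 \<Longrightarrow> \<exists>i. mdist m (e i) y < \<epsilon>"
proof -
  obtain D where D: "countable D" "D \<subseteq> mspace m" "mtopology_of m closure_of D = mspace m"
    using sep unfolding separable_space_def by auto
  have "D \<noteq> {}" using D(3) ne by force
  show thesis
  proof (rule that)
    show "range (from_nat_into D) \<subseteq> mspace m"
      using range_from_nat_into_subset[OF \<open>D \<noteq> {}\<close>] D(2) by (rule order_trans)
    fix y and \<epsilon> :: real assume "y \<in> mspace m" "\<epsilon> > 0"
    then have "y \<in> mtopology_of m closure_of D" using D(3) by simp
    then have "\<forall>r>0. \<exists>d\<in>D. d \<in> mball_of m y r"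
      by (simp add: mtopology_of_def mball_of_def
          Metric_space.metric_closure_of[OF Metric_space_mspace_mdist])
    then obtain d where d: "d \<in> D" "d \<in> mball_of m y \<epsilon>" using \<open>\<epsilon> > 0\<close> by blast
    obtain i where "from_nat_into D i = d" using from_nat_into_surj[OF D(1) d(1)] by blast
    then have "mdist m (from_nat_into D i) y < \<epsilon>" using d(2) by (simp add: mdist_commute)
    then show "\<exists>i. mdist m (from_nat_into D i) y < \<epsilon>" by blast
  qed
qed

lemma baire_class_1_closed_covers:
  fixes f :: "'a \<Rightarrow> 'b"
  assumes bf: "baire_class_1 mX mY f" and sep: "separable_space (mtopology_of mY)"
    and ne: "mspace mX \<noteq> {}"
  obtains C :: "nat \<Rightarrow> nat \<Rightarrow> 'a set" and w
  where "\<And>n j. closedin (mtopology_of mX) (C n j)"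
    and "\<And>n x. x \<in> mspace mX \<Longrightarrow> \<exists>j. x \<in> C n j"
    and "\<And>n j x. x \<in> C n j \<Longrightarrow> mdist mY (f x) (w n j) < 1 / Suc n"
    and "\<And>n j. w n j \<in> mspace mY"
proof -
  have f: "f \<in> mspace mX \<rightarrow> mspace mY" using bf by (simp add: baire_class_1_def)
  then have "mspace mY \<noteq> {}" using ne by blast
  then obtain e :: "nat \<Rightarrow> 'b" where e: "range e \<subseteq> mspace mY"
    and dense: "\<And>y \<epsilon>. y \<in> mspace mY \<Longrightarrow> \<epsilon> > 0 \<Longrightarrow> \<exists>i. mdist mY (e i) y < \<epsilon>"
    using separable_space_dense_sequence[OF sep] by blast
  define P where "P n i = {x \<in> mspace mX. f x \<in> mball_of mY (e i) (1 / Suc n)}" for n i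
  have "fsigma_in (mtopology_of mX) (P n i)" for n i
    using bf openin_mball_of[of mY "e i" "1 / Suc n"] unfolding baire_class_1_def P_def by blast
  then have ex: "\<exists>Cs :: nat \<Rightarrow> 'a set. (\<forall>k. closedin (mtopology_of mX) (Cs k)) \<and> \<Union> (range Cs) = P n i"
    for n i
    unfolding fsigma_in_ascending by meson
  define Cl :: "nat \<Rightarrow> nat \<Rightarrow> nat \<Rightarrow> 'a set"
    where "Cl n i = (SOME Cs. (\<forall>k. closedin (mtopology_of mX) (Cs k)) \<and> \<Union> (range Cs) = P n i)"
    for n i
  have Cl: "(\<forall>k. closedin (mtopology_of mX) (Cl n i k)) \<and> \<Union> (range (Cl n i)) = P n i" for n i
    using someI_ex[OF ex[of n i]] unfolding Cl_def .
  then have closed: "\<And>n i k. closedin (mtopology_of mX) (Cl n i k)"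
    and union: "\<And>n i. \<Union> (range (Cl n i)) = P n i"
    by blast+
  define C where "C n j = (case prod_decode j of (i, k) \<Rightarrow> Cl n i k)" for n j
  define w where "w n j = e (fst (prod_decode j))" for n j :: nat
  show thesis
  proof (rule that[of C w])
    show "closedin (mtopology_of mX) (C n j)" for n j
      by (simp add: C_def closed split: prod.split)
    show "\<exists>j. x \<in> C n j" if x: "x \<in> mspace mX" for n x
    proof -
      obtain i where "mdist mY (e i) (f x) < 1 / Suc n"
        using dense[of "f x" "1 / Suc n"] f x by auto
      then have "x \<in> \<Union> (range (Cl n i))" using union[of n i] e x f by (auto simp: P_def mdist_commute)
      then obtain k where "x \<in> Cl n i k" by blast
      then have "x \<in> C n (prod_encode (i, k))" by (simp add: C_def)
      then show ?thesis by blast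
    qed
    show "mdist mY (f x) (w n j) < 1 / Suc n" if "x \<in> C n j" for n j x
      using that union[of n "fst (prod_decode j)"]
      by (auto simp: C_def w_def P_def mdist_commute split: prod.splits)
    show "w n j \<in> mspace mY" for n j
      using e by (auto simp: w_def)
  qed
qed

lemma baire_class_1_imp_omega_full_limit:
  fixes f :: "'a \<Rightarrow> 'b"
  assumes ultra: "ultrametric mX" and sep: "separable_space (mtopology_of mY)"
    and bf: "baire_class_1 mX mY f"
  shows "\<exists>g. (\<forall>n. omega_full mX mY (g n)) \<and> pointwise_limit mX mY g f"
proof (cases "mspace mX = {}")
  case True
  then have "omega_full mX mY f" "pointwise_limit mX mY (\<lambda>n. f) f"
    by (auto simp: omega_full_def pointwise_limit_def intro: exI[of _ 1])
  then show ?thesis by (intro exI[of _ "\<lambda>n. f"]) simp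
next
  case False
  have f: "f \<in> mspace mX \<rightarrow> mspace mY" using bf by (simp add: baire_class_1_def)
  obtain C :: "nat \<Rightarrow> nat \<Rightarrow> 'a set" and w :: "nat \<Rightarrow> nat \<Rightarrow> 'b"
    where "\<And>n j. closedin (mtopology_of mX) (C n j)"
      and "\<And>n x. x \<in> mspace mX \<Longrightarrow> \<exists>j. x \<in> C n j"
      and "\<And>n j x. x \<in> C n j \<Longrightarrow> mdist mY (f x) (w n j) < 1 / Suc n"
      and "\<And>n j. w n j \<in> mspace mY"
    using baire_class_1_closed_covers[OF bf sep False] by blast
  then show ?thesis using omega_full_limit_of_closed_covers[OF ultra _ _ _ _ f] by blast
qed

theorem mainTheorem2:
  fixes mX :: "'a metric" and mY :: "'b metric" and f :: "'a \<Rightarrow> 'b"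
  assumes "separable_space (mtopology_of mX)"
    and "separable_space (mtopology_of mY)"
    and "ultrametric mX"
    and "f \<in> mspace mX \<rightarrow> mspace mY"
  shows "(baire_class_1 mX mY f
            \<longleftrightarrow> (\<exists>g. (\<forall>n. omega_full mX mY (g n)) \<and> pointwise_limit mX mY g f))
       \<and> (baire_class_1 mX mY f
            \<longleftrightarrow> (\<exists>g. (\<forall>n. Lipschitz_continuous_map mX mY (g n)) \<and> pointwise_limit mX mY g f))
       \<and> (baire_class_1 mX mY f
            \<longleftrightarrow> (\<exists>g. (\<forall>n. uniformly_continuous_map mX mY (g n)) \<and> pointwise_limit mX mY g f))"
proof -
  have "baire_class_1 mX mY f \<Longrightarrow> \<exists>g. (\<forall>n. omega_full mX mY (g n)) \<and> pointwise_limit mX mY g f"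
    using baire_class_1_imp_omega_full_limit assms(2,3) by blast
  moreover have "\<exists>g. (\<forall>n. Lipschitz_continuous_map mX mY (g n)) \<and> pointwise_limit mX mY g f"
    if "\<exists>g. (\<forall>n. omega_full mX mY (g n)) \<and> pointwise_limit mX mY g f"
    using that omega_full_limit_imp_Lipschitz_limit by blast
  moreover have "\<exists>g. (\<forall>n. uniformly_continuous_map mX mY (g n)) \<and> pointwise_limit mX mY g f"
    if "\<exists>g. (\<forall>n. Lipschitz_continuous_map mX mY (g n)) \<and> pointwise_limit mX mY g f"
    using that Lipschitz_imp_uniformly_continuous_map by blast
  moreover have "baire_class_1 mX mY f"
    if "\<exists>g. (\<forall>n. uniformly_continuous_map mX mY (g n)) \<and> pointwise_limit mX mY g f"
    using that baire_class_1_pointwise_limit_continuous[OF _ _ assms(4)]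
      uniformly_continuous_imp_continuous_map by blast
  ultimately show ?thesis by blast
qed

end
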